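(* Let $n,\ell$ be positive integers with $\ell\mid n$, and let $p_0,\dots,p_{n/\ell-1}\in(0,1)$. Let $T$ be the runtime of the (1+1) EA on $\mathrm{BLO}_\ell$ using mutation rate $p_m$ whenever the current individual has fitness $m$. Then \[ \mathbb{E}[T]=\sum_{m=0}^{n/\ell-1}\frac{1}{(1-p_m)^{m\ell}}\sum_{j=1}^{\ell}\binom{\ell}{j}\frac{1}{1-(1-2p_m)^j}. \] In particular, for a static mutation rate $p\in(0,1)$ (i.e. $p_m=p$ for all $m$), \[ \mathbb{E}[T]=\frac{(1-p)^{-n+\ell}-(1-p)^{\ell}}{1-(1-p)^{\ell}}\sum_{j=1}^{\ell}\binom{\ell}{j}\frac{1}{1-(1-2p)^j}. \]
   Context: For positive integers $n,\ell$ with $\ell\mid n$, the BlockLeadingOnes function $\mathrm{BLO}_\ell:\{0,1\}^n\to\{0,\dots,n/\ell\}$ is $\mathrm{BLO}_\ell(x)=\sum_{m=1}^{n/\ell}\prod_{i=1}^{m\ell}x_i$, i.e. the number of leading blocks of $\ell$ consecutive bits that consist only of ones (equivalently $\lfloor \mathrm{LO}(x)/\ell\rfloor$ where $\mathrm{LO}(x)$ is the number of leading ones of $x$). The (1+1) EA: $x_0$ is uniform on $\{0,1\}^n$; in iteration $t=1,2,\dots$ an offspring $y$ is obtained from $x_{t-1}$ by flipping each bit independently with probability $q_t$, where $q_t=p_{\mathrm{BLO}_\ell(x_{t-1})}$ (fitness-dependent rate), and $x_t=y$ if $\mathrm{BLO}_\ell(y)\ge \mathrm{BLO}_\ell(x_{t-1})$,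 otherwise $x_t=x_{t-1}$. The runtime is $T=\min\{t\ge0:\mathrm{BLO}_\ell(x_t)=n/\ell\}$. *)

theory Defs
  imports "HOL-Probability.Probability"
begin

text \<open>Bit strings of length n are bool lists; bit x_i (1-based) is x ! (i - 1).\<close>

definition BLO :: "nat \<Rightarrow> bool list \<Rightarrow> nat" where
  "BLO l x = (\<Sum>m = 1..length x div l. \<Prod>i = 1..m * l. (if x ! (i - 1) then 1 else 0))"

fun flip_mask :: "nat \<Rightarrow> real \<Rightarrow> bool list pmf" where
  "flip_mask 0 q = return_pmf []"
| "flip_mask (Suc k) q =
     bernoulli_pmf q \<bind> (\<lambda>b. flip_mask k q \<bind> (\<lambda>bs. return_pmf (b # bs)))"

text \<open>Randomness used in one iteration: for every fitness level m < n div l an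
  independent mask with rate p m; the iteration uses the mask belonging to the
  current fitness, so the offspring is obtained by flipping each bit independently
  with probability p (BLO l x).  (Equal in distribution to the (1+1) EA step.)\<close>
definition step_rand :: "nat \<Rightarrow> nat \<Rightarrow> (nat \<Rightarrow> real) \<Rightarrow> (nat \<Rightarrow> bool list) pmf" where
  "step_rand n l p = Pi_pmf {..< n div l} [] (\<lambda>m. flip_mask n (p m))"

definition ea_step :: "nat \<Rightarrow> bool list \<Rightarrow> (nat \<Rightarrow> bool list) \<Rightarrow> bool list" where
  "ea_step l x r =
     (let y = map2 (\<lambda>a b. a \<noteq> b) x (r (BLO l x))
      in if BLO l y \<ge> BLO l x then y else x)"

fun ea_run :: "nat \<Rightarrow> bool list \<Rightarrow> (nat \<Rightarrow> bool list) stream \<Rightarrow> nat \<Rightarrow> bool list" where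
  "ea_run l x0 \<omega> 0 = x0"
| "ea_run l x0 \<omega> (Suc t) = ea_step l (ea_run l x0 \<omega> t) (\<omega> !! t)"

definition ea_space :: "nat \<Rightarrow> nat \<Rightarrow> (nat \<Rightarrow> real) \<Rightarrow>
    (bool list \<times> (nat \<Rightarrow> bool list) stream) measure" where
  "ea_space n l p =
     measure_pmf (pmf_of_set {x. length x = n}) \<Otimes>\<^sub>M stream_space (measure_pmf (step_rand n l p))"

definition ea_runtime :: "nat \<Rightarrow> nat \<Rightarrow> bool list \<times> (nat \<Rightarrow> bool list) stream \<Rightarrow> enat" where
  "ea_runtime n l \<omega> =
     (if \<exists>t. BLO l (ea_run l (fst \<omega>) (snd \<omega>) t) = n div l
      then enat (LEAST t. BLO l (ea_run l (fst \<omega>) (snd \<omega>) t) = n div l)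
      else \<infinity>)"

definition ea_expected_runtime :: "nat \<Rightarrow> nat \<Rightarrow> (nat \<Rightarrow> real) \<Rightarrow> ennreal" where
  "ea_expected_runtime n l p =
     (\<integral>\<^sup>+ \<omega>. ennreal_of_enat (ea_runtime n l \<omega>) \<partial>ea_space n l p)"

end

theory Submission
  imports Defs
begin

text \<open>
  The proof evaluates the expected runtime from a uniform start through a potential. On a
  single block of \<open>l\<close> bits, the walk that flips every bit with probability \<open>q\<close> and stops
  at the all-ones block has the explicit expected hitting time
  \<open>h(b) = \<Sum>s \<noteq> 0. (1 - \<chi>\<^sub>s(b)) / (1 - (1 - 2q)^|s|)\<close>, because the Walsh characters
  \<open>\<chi>\<^sub>s\<close> are eigenfunctions of the flip kernel with eigenvalues \<open>(1 - 2q)^|s|\<close>.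
  The potential \<open>\<Phi>(x) = \<Sum>\<^sub>j h\<^sub>j(block j of x) / (1 - p\<^sub>j)^(j l)\<close> does not solve
  \<open>\<Phi> = 1 + K \<Phi>\<close> off the optimum exactly, but its defect sums to zero over the tail of every
  string of a given fitness \<open>i\<close> and current block: a step from fitness \<open>i\<close> keeps the
  prefix with probability \<open>(1 - p\<^sub>i)^(i l)\<close>, moves the current block like the single-block
  walk, and keeps the tail uniform. The kernel killed at the optimum preserves this
  balance, so averaged over the uniform start the truncated expectations \<open>E[min(T, N)]\<close>
  differ from the mean of \<open>\<Phi>\<close> by a geometrically small remainder. The mean of \<open>\<Phi>\<close> is
  the stated formula, and for a static rate the sum over the levels is geometric.
\<close>

definition bitstrings :: "nat \<Rightarrow> bool list set" where
  "bitstrings N = {xs. length xs = N}"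

definition mask_prob :: "real \<Rightarrow> bool list \<Rightarrow> real" where
  "mask_prob q M = (\<Prod>b\<leftarrow>M. if b then q else 1 - q)"

definition xor_list :: "bool list \<Rightarrow> bool list \<Rightarrow> bool list" where
  "xor_list x M = map2 (\<noteq>) x M"

lemma bitstrings_eq_lists: "bitstrings N = {xs. set xs \<subseteq> UNIV \<and> length xs = N}"
  unfolding bitstrings_def by simp

lemma finite_bitstrings [simp]: "finite (bitstrings N)"
  unfolding bitstrings_eq_lists using finite_lists_length_eq[of "UNIV :: bool set"] by simp

lemma card_bitstrings [simp]: "card (bitstrings N) = 2 ^ N"
  unfolding bitstrings_eq_lists using card_lists_length_eq[of "UNIV :: bool set"] by simp

lemma bitstrings_0: "bitstrings 0 = {[]}"
  unfolding bitstrings_def by auto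

lemma replicate_in_bitstrings [simp]: "replicate N b \<in> bitstrings N"
  unfolding bitstrings_def by simp

lemma mask_prob_append: "mask_prob q (u @ v) = mask_prob q u * mask_prob q v"
  unfolding mask_prob_def by simp

lemma mask_prob_nonneg: "0 \<le> q \<Longrightarrow> q \<le> 1 \<Longrightarrow> 0 \<le> mask_prob q M"
  unfolding mask_prob_def by (induction M) auto

lemma mask_prob_pos: "0 < q \<Longrightarrow> q < 1 \<Longrightarrow> 0 < mask_prob q M"
  unfolding mask_prob_def by (induction M) auto

lemma sum_bitstrings_append:
  "(\<Sum>M\<in>bitstrings (a + b). F M) = (\<Sum>u\<in>bitstrings a. \<Sum>v\<in>bitstrings b. F (u @ v))"
proof -
  have "bij_betw (\<lambda>(u, v). u @ v) (bitstrings a \<times> bitstrings b) (bitstrings (a + b))"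
    by (rule bij_betw_byWitness[where f' = "\<lambda>M. (take a M, drop a M)"])
       (auto simp: bitstrings_def)
  then have "(\<Sum>M\<in>bitstrings (a + b). F M) = (\<Sum>(u, v)\<in>bitstrings a \<times> bitstrings b. F (u @ v))"
    by (simp add: sum.reindex_bij_betw[symmetric] case_prod_unfold)
  then show ?thesis
    by (simp add: sum.cartesian_product)
qed

lemma sum_bitstrings_Suc:
  "(\<Sum>M\<in>bitstrings (Suc N). F M) = (\<Sum>v\<in>bitstrings N. F (True # v)) + (\<Sum>v\<in>bitstrings N. F (False # v))"
proof -
  have "bitstrings 1 = {[True], [False]}"
    unfolding bitstrings_def by (auto simp: length_Suc_conv)
  then show ?thesis
    using sum_bitstrings_append[of F 1 N] by simp
qed

lemma sum_mask_prob: "(\<Sum>M\<in>bitstrings N. mask_prob q M) = 1"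
proof (induction N)
  case (Suc N)
  then show ?case
    unfolding sum_bitstrings_Suc by (simp add: mask_prob_def sum_distrib_left[symmetric])
qed (simp add: bitstrings_0 mask_prob_def)

lemma sum_mask_prob_if_zero:
  "(\<Sum>u\<in>bitstrings N. mask_prob q u * (if u = replicate N False then X else Y)) =
     (1 - q) ^ N * X + (1 - (1 - q) ^ N) * Y"
proof -
  have zero: "mask_prob q (replicate N False) = (1 - q) ^ N"
    by (simp add: mask_prob_def)
  have "(\<Sum>u\<in>bitstrings N - {replicate N False}. mask_prob q u) = 1 - (1 - q) ^ N"
    by (simp add: sum_diff1 sum_mask_prob zero)
  moreover have "(\<Sum>u\<in>bitstrings N - {replicate N False}. mask_prob q u * (if u = replicate N False then X else Y))
      = (\<Sum>u\<in>bitstrings N - {replicate N False}. mask_prob q u) * Y"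
    by (simp add: sum_distrib_right)
  ultimately show ?thesis
    by (simp add: sum.remove[of _ "replicate N False"] zero)
qed

lemma flip_mask_Suc_eq_map_pair:
  "flip_mask (Suc N) q = map_pmf (\<lambda>(c, cs). c # cs) (pair_pmf (bernoulli_pmf q) (flip_mask N q))"
  unfolding map_pmf_def pair_pmf_def by (simp add: bind_assoc_pmf bind_return_pmf)

lemma pmf_flip_mask_Suc:
  "pmf (flip_mask (Suc N) q) [] = 0"
  "pmf (flip_mask (Suc N) q) (c # cs) = pmf (bernoulli_pmf q) c * pmf (flip_mask N q) cs"
proof -
  have "inj (\<lambda>(c :: bool, cs). c # cs)"
    by (auto simp: inj_def)
  from pmf_map_inj'[OF this, of _ "(c, cs)"]
  show "pmf (flip_mask (Suc N) q) (c # cs) = pmf (bernoulli_pmf q) c * pmf (flip_mask N q) cs"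
    unfolding flip_mask_Suc_eq_map_pair by (simp add: pmf_pair)
  show "pmf (flip_mask (Suc N) q) [] = 0"
    unfolding flip_mask_Suc_eq_map_pair by (auto simp: pmf_eq_0_set_pmf)
qed

lemma pmf_flip_mask:
  assumes "0 \<le> q" "q \<le> 1"
  shows "pmf (flip_mask N q) M = (if M \<in> bitstrings N then mask_prob q M else 0)"
proof (induction N arbitrary: M)
  case (Suc N)
  then show ?case
    using assms by (cases M) (simp_all add: pmf_flip_mask_Suc bitstrings_def mask_prob_def del: flip_mask.simps)
qed (auto simp: bitstrings_def mask_prob_def)

lemma set_pmf_flip_mask: "0 \<le> q \<Longrightarrow> q \<le> 1 \<Longrightarrow> set_pmf (flip_mask N q) \<subseteq> bitstrings N"
  using pmf_flip_mask[of q N] by (auto simp: set_pmf_iff split: if_splits)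

lemma length_xor_list [simp]: "length (xor_list x M) = min (length x) (length M)"
  unfolding xor_list_def by simp

lemma xor_list_append: "length a = length c \<Longrightarrow> xor_list (a @ b) (c @ d) = xor_list a c @ xor_list b d"
  unfolding xor_list_def by simp

lemma xor_list_xor_list: "length x = length M \<Longrightarrow> xor_list (xor_list x M) M = x"
  unfolding xor_list_def by (induction x M rule: list_induct2) auto

lemma xor_list_replicate_True: "length u = N \<Longrightarrow> xor_list (replicate N True) u = map Not u"
  unfolding xor_list_def by (induction u arbitrary: N) auto

lemma map_Not_eq_replicate_True_iff: "map Not u = replicate (length u) True \<longleftrightarrow> u = replicate (length u) False"
  by (induction u) auto

lemma xor_list_map_Not: "xor_list x (map Not x) = replicate (length x) True"
  unfolding xor_list_def by (induction x) auto

lemma sum_xor_list_shift: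
  "v \<in> bitstrings N \<Longrightarrow> (\<Sum>s\<in>bitstrings N. F (xor_list s v)) = (\<Sum>s\<in>bitstrings N. F s)"
  by (rule sum.reindex_bij_witness[where i="\<lambda>s. xor_list s v" and j="\<lambda>s. xor_list s v"])
     (auto simp: bitstrings_def xor_list_xor_list)

lemma sum_mask_prob_xor_shift:
  "(\<Sum>s\<in>bitstrings N. \<Sum>t\<in>bitstrings N. mask_prob q t * F (xor_list s t)) = (\<Sum>s\<in>bitstrings N. F s)"
proof -
  have "(\<Sum>s\<in>bitstrings N. \<Sum>t\<in>bitstrings N. mask_prob q t * F (xor_list s t)) =
      (\<Sum>t\<in>bitstrings N. mask_prob q t * (\<Sum>s\<in>bitstrings N. F (xor_list s t)))"
    by (subst sum.swap) (simp add: sum_distrib_left)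
  also have "\<dots> = (\<Sum>t\<in>bitstrings N. mask_prob q t) * (\<Sum>s\<in>bitstrings N. F s)"
    by (simp add: sum_xor_list_shift sum_distrib_right)
  finally show ?thesis
    by (simp add: sum_mask_prob)
qed

lemma BLO_eq_card:
  assumes "l > 0" "length x = k * l"
  shows "BLO l x = card {m\<in>{1..k}. take (m * l) x = replicate (m * l) True}"
proof -
  have blocks: "length x div l = k"
    using assms by simp
  have prod_eq: "(\<Prod>i = 1..m * l. if x ! (i - 1) then 1 else 0) =
      (if take (m * l) x = replicate (m * l) True then 1 else (0::nat))" if "m \<in> {1..k}" for m
  proof (cases "\<forall>j<m * l. x ! j")
    case True
    then have "(\<Prod>i = 1..m * l. if x ! (i - 1) then 1 else 0) = (1::nat)"
      by (intro prod.neutral) auto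
    with True that assms show ?thesis
      by (auto simp: list_eq_iff_nth_eq)
  next
    case False
    then obtain j where "j < m * l" "\<not> x ! j"
      by auto
    with that assms show ?thesis
      by (auto simp: list_eq_iff_nth_eq intro!: prod_zero bexI[of _ "Suc j"])
  qed
  have "BLO l x = (\<Sum>m = 1..k. if take (m * l) x = replicate (m * l) True then 1 else 0)"
    unfolding BLO_def blocks by (rule sum.cong[OF refl prod_eq])
  then show ?thesis
    by (simp add: sum.inter_filter[symmetric])
qed

lemma le_BLO_iff:
  assumes "l > 0" "length x = k * l" "m \<le> k"
  shows "m \<le> BLO l x \<longleftrightarrow> take (m * l) x = replicate (m * l) True"
proof -
  define A where "A = {m\<in>{1..k}. take (m * l) x = replicate (m * l) True}"
  have down_closed: "take (m' * l) x = replicate (m' * l) True"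
    if "take (m2 * l) x = replicate (m2 * l) True" "m' \<le> m2" for m' m2
  proof -
    have "m' * l \<le> m2 * l"
      using that(2) by simp
    then have "take (m' * l) x = take (m' * l) (take (m2 * l) x)"
      by (simp add: min_def)
    with that(1) \<open>m' * l \<le> m2 * l\<close> show ?thesis
      by (simp add: min_def)
  qed
  have BLO_A: "BLO l x = card A"
    unfolding A_def by (rule BLO_eq_card[OF assms(1,2)])
  show ?thesis
  proof (cases "take (m * l) x = replicate (m * l) True")
    case True
    then have "{1..m} \<subseteq> A"
      using assms(3) down_closed unfolding A_def by auto
    then show ?thesis
      using True card_mono[of A "{1..m}"] by (simp add: BLO_A A_def)
  next
    case False
    then have "m > 0"
      by (cases m) auto
    from False have "A \<subseteq> {1..m - 1}"
      using down_closed[of _ m] unfolding A_def by (force simp: not_le[symmetric])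
    then show ?thesis
      using False \<open>m > 0\<close> card_mono[of "{1..m - 1}" A] by (simp add: BLO_A)
  qed
qed

lemma BLO_le_blocks:
  assumes "l > 0" "length x = k * l"
  shows "BLO l x \<le> k"
proof -
  have "card {m\<in>{1..k}. take (m * l) x = replicate (m * l) True} \<le> card {1..k}"
    by (rule card_mono) auto
  then show ?thesis
    unfolding BLO_eq_card[OF assms] by simp
qed

definition ea_select :: "nat \<Rightarrow> bool list \<Rightarrow> bool list \<Rightarrow> bool list" where
  "ea_select l x M = (let y = xor_list x M in if BLO l y \<ge> BLO l x then y else x)"

lemma ea_step_eq_ea_select: "ea_step l x r = ea_select l x (r (BLO l x))"
  unfolding ea_step_def ea_select_def xor_list_def by simp

lemma ea_select_bitstrings: "x \<in> bitstrings N \<Longrightarrow> M \<in> bitstrings N \<Longrightarrow> ea_select l x M \<in> bitstrings N"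
  unfolding ea_select_def Let_def bitstrings_def by simp

fun runtime_upto :: "nat \<Rightarrow> nat \<Rightarrow> nat \<Rightarrow> bool list \<Rightarrow> (nat \<Rightarrow> bool list) stream \<Rightarrow> ennreal" where
  "runtime_upto n l 0 x \<omega> = 0"
| "runtime_upto n l (Suc N) x \<omega> =
     (if BLO l x = n div l then 0 else 1 + runtime_upto n l N (ea_step l x (shd \<omega>)) (stl \<omega>))"

lemma ea_run_Suc_shift: "ea_run l x \<omega> (Suc t) = ea_run l (ea_step l x (shd \<omega>)) (stl \<omega>) t"
proof (induction t)
  case (Suc t)
  then show ?case
    by simp
qed simp

lemma ea_runtime_unfold:
  "ea_runtime n l (x, \<omega>) =
     (if BLO l x = n div l then 0 else eSuc (ea_runtime n l (ea_step l x (shd \<omega>), stl \<omega>)))"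
proof -
  let ?P = "\<lambda>t. BLO l (ea_run l x \<omega> t) = n div l"
  let ?P' = "\<lambda>t. BLO l (ea_run l (ea_step l x (shd \<omega>)) (stl \<omega>) t) = n div l"
  have shift: "?P (Suc t) = ?P' t" for t
    by (simp only: ea_run_Suc_shift)
  show ?thesis
  proof (cases "?P 0")
    case True
    then have "\<exists>t. ?P t" "(LEAST t. ?P t) = 0"
      by (auto intro: Least_eq_0 exI[of _ 0])
    with True show ?thesis
      unfolding ea_runtime_def by (simp add: zero_enat_def)
  next
    case False
    have ex: "(\<exists>t. ?P t) \<longleftrightarrow> (\<exists>t. ?P' t)"
      using False shift by (metis not0_implies_Suc)
    have "(LEAST t. ?P t) = Suc (LEAST t. ?P' t)" if "?P' t" for t
    proof (rule Least_Suc2)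
      show "?P (Suc t)" "?P' t"
        using that shift by blast+
      show "\<not> ?P 0" "\<forall>t. ?P (Suc t) = ?P' t"
        using False shift by blast+
    qed
    then show ?thesis
      using False ex unfolding ea_runtime_def by (auto simp: eSuc_enat)
  qed
qed

lemma runtime_upto_eq_min: "runtime_upto n l N x \<omega> = ennreal_of_enat (min (ea_runtime n l (x, \<omega>)) (enat N))"
proof (induction N arbitrary: x \<omega>)
  case 0
  then show ?case
    by (simp add: zero_enat_def[symmetric])
next
  case (Suc N)
  have "min (eSuc e) (enat (Suc N)) = eSuc (min e (enat N))" for e
    by (simp add: eSuc_enat[symmetric] min_def)
  then show ?case
    using Suc.IH by (subst ea_runtime_unfold) simp
qed

lemma SUP_runtime_upto: "(SUP N. runtime_upto n l N x \<omega>) = ennreal_of_enat (ea_runtime n l (x, \<omega>))"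
proof (cases "ea_runtime n l (x, \<omega>)")
  case (enat t)
  show ?thesis
  proof (rule antisym)
    show "(SUP N. runtime_upto n l N x \<omega>) \<le> ennreal_of_enat (ea_runtime n l (x, \<omega>))"
      unfolding runtime_upto_eq_min by (intro SUP_least ennreal_of_enat_le_iff[THEN iffD2]) simp
    have "runtime_upto n l t x \<omega> = ennreal_of_enat (ea_runtime n l (x, \<omega>))"
      unfolding runtime_upto_eq_min enat by simp
    then show "ennreal_of_enat (ea_runtime n l (x, \<omega>)) \<le> (SUP N. runtime_upto n l N x \<omega>)"
      by (metis SUP_upper UNIV_I)
  qed
next
  case infinity
  then show ?thesis
    unfolding runtime_upto_eq_min by (simp add: ennreal_SUP_of_nat_eq_top)
qed

lemma incseq_runtime_upto: "incseq (\<lambda>N. runtime_upto n l N x \<omega>)"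
  unfolding runtime_upto_eq_min by (intro incseq_SucI ennreal_of_enat_le_iff[THEN iffD2] min.mono) auto

lemma runtime_upto_measurable: "runtime_upto n l N x \<in> borel_measurable (stream_space (measure_pmf R))"
proof (induction N arbitrary: x)
  case 0
  have "runtime_upto n l 0 x = (\<lambda>_. 0)"
    by (rule ext) simp
  then show ?case
    by simp
next
  case (Suc N)
  have "(\<lambda>\<omega>. ea_step l x (shd \<omega>)) \<in> measurable (stream_space (measure_pmf R)) (count_space UNIV)"
    using measurable_shd[of "measure_pmf R"] by (rule measurable_compose) simp
  moreover have "(\<lambda>\<omega>. runtime_upto n l N y (stl \<omega>)) \<in> borel_measurable (stream_space (measure_pmf R))" for y
    using measurable_stl Suc.IH by (rule measurable_compose)
  ultimately show ?case
    using measurable_compose_countable by simp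
qed

section \<open>The hitting time of a single block\<close>

fun walsh :: "bool list \<Rightarrow> bool list \<Rightarrow> real" where
  "walsh [] _ = 1"
| "walsh (s # ss) [] = 1"
| "walsh (s # ss) (b # bs) = (if s \<and> \<not> b then -1 else 1) * walsh ss bs"

definition block_time :: "nat \<Rightarrow> real \<Rightarrow> bool list \<Rightarrow> real" where
  "block_time N r b =
     (\<Sum>s\<in>bitstrings N - {replicate N False}. (1 - walsh s b) / (1 - r ^ count_list s True))"

lemma walsh_all_ones: "walsh s (replicate N True) = 1"
proof (induction s arbitrary: N)
  case (Cons a s)
  then show ?case
    by (cases N) simp_all
qed simp

lemma walsh_zero: "walsh (replicate N False) b = 1"
  by (induction N arbitrary: b) (auto, case_tac b, auto)

lemma block_time_all_ones: "block_time N r (replicate N True) = 0"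
  unfolding block_time_def by (simp add: walsh_all_ones)

lemma expect_walsh_xor:
  assumes "length b = N" "length s = N"
  shows "(\<Sum>v\<in>bitstrings N. mask_prob q v * walsh s (xor_list b v)) = walsh s b * (1 - 2 * q) ^ count_list s True"
  using assms
proof (induction N arbitrary: s b)
  case 0
  then show ?case
    by (simp add: bitstrings_0 mask_prob_def xor_list_def)
next
  case (Suc N)
  obtain s0 s' where s: "s = s0 # s'" "length s' = N"
    using Suc.prems by (cases s) auto
  obtain b0 b' where b: "b = b0 # b'" "length b' = N"
    using Suc.prems by (cases b) auto
  let ?X = "\<Sum>v\<in>bitstrings N. mask_prob q v * walsh s' (xor_list b' v)"
  have Cons: "mask_prob q (c # v) * walsh s (xor_list b (c # v)) =
      ((if c then q else 1 - q) * (if s0 \<and> \<not> (b0 \<noteq> c) then -1 else 1)) * (mask_prob q v * walsh s' (xor_list b' v))"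
    for c v using s b by (simp add: mask_prob_def xor_list_def)
  have "(\<Sum>v\<in>bitstrings (Suc N). mask_prob q v * walsh s (xor_list b v)) =
      (q * (if s0 \<and> \<not> (b0 \<noteq> True) then -1 else 1)) * ?X + ((1 - q) * (if s0 \<and> \<not> (b0 \<noteq> False) then -1 else 1)) * ?X"
    by (simp only: sum_bitstrings_Suc Cons sum_distrib_left[symmetric] if_True if_False)
  also have "\<dots> = walsh s b * (1 - 2 * q) ^ count_list s True"
    unfolding Suc.IH[OF b(2) s(2)] using s b by (auto simp: algebra_simps)
  finally show ?case .
qed

lemma sum_walsh_snd:
  assumes "length b = N"
  shows "(\<Sum>s\<in>bitstrings N. walsh s b) = (if b = replicate N True then 2 ^ N else 0)"
  using assms
proof (induction N arbitrary: b)
  case (Suc N)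
  obtain b0 b' where b: "b = b0 # b'" "length b' = N"
    using Suc.prems by (cases b) auto
  have "(\<Sum>s\<in>bitstrings (Suc N). walsh s b) = (if b0 then 2 else 0) * (\<Sum>s\<in>bitstrings N. walsh s b')"
    unfolding sum_bitstrings_Suc using b by (auto simp: sum_negf)
  then show ?case
    using Suc.IH[OF b(2)] b by auto
qed (simp add: bitstrings_0)

lemma sum_walsh_fst:
  assumes "length s = N"
  shows "(\<Sum>b\<in>bitstrings N. walsh s b) = (if s = replicate N False then 2 ^ N else 0)"
  using assms
proof (induction N arbitrary: s)
  case (Suc N)
  obtain s0 s' where s: "s = s0 # s'" "length s' = N"
    using Suc.prems by (cases s) auto
  have "(\<Sum>b\<in>bitstrings (Suc N). walsh s b) = (if s0 then 0 else 2) * (\<Sum>b\<in>bitstrings N. walsh s' b)"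
    unfolding sum_bitstrings_Suc using s by (auto simp: sum_negf)
  then show ?case
    using Suc.IH[OF s(2)] s by auto
qed (simp add: bitstrings_0)

lemma power_count_list_neq_1:
  fixes r :: real
  assumes "\<bar>r\<bar> < 1" "s \<in> bitstrings N - {replicate N False}"
  shows "1 - r ^ count_list s True \<noteq> 0"
proof -
  have "True \<in> set s"
  proof (rule ccontr)
    assume "True \<notin> set s"
    then have "s = replicate (length s) False"
      by (metis (full_types) replicate_length_same)
    with assms(2) show False
      by (simp add: bitstrings_def)
  qed
  then have "count_list s True \<noteq> 0"
    by (simp add: count_list_0_iff)
  then have "\<bar>r\<bar> ^ count_list s True < 1"
    using assms(1) by (simp add: power_less_one_iff)
  then have "\<bar>r ^ count_list s True\<bar> < 1"
    by (simp add: power_abs)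
  then show ?thesis
    by auto
qed

lemma expect_block_time_xor:
  assumes "length b = N"
  shows "(\<Sum>v\<in>bitstrings N. mask_prob q v * block_time N (1 - 2 * q) (xor_list b v)) =
    (\<Sum>s\<in>bitstrings N - {replicate N False}.
       (1 - walsh s b * (1 - 2 * q) ^ count_list s True) / (1 - (1 - 2 * q) ^ count_list s True))"
proof -
  let ?d = "\<lambda>s. 1 - (1 - 2 * q) ^ count_list s True"
  have "(\<Sum>v\<in>bitstrings N. mask_prob q v * block_time N (1 - 2 * q) (xor_list b v)) =
      (\<Sum>s\<in>bitstrings N - {replicate N False}.
         (\<Sum>v\<in>bitstrings N. mask_prob q v - mask_prob q v * walsh s (xor_list b v)) / ?d s)"
    unfolding block_time_def sum_distrib_left
    by (subst sum.swap) (simp add: sum_divide_distrib algebra_simps)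
  also have "\<dots> = (\<Sum>s\<in>bitstrings N - {replicate N False}. (1 - walsh s b * (1 - 2 * q) ^ count_list s True) / ?d s)"
  proof (intro sum.cong refl)
    fix s assume "s \<in> bitstrings N - {replicate N False}"
    then have "length s = N"
      by (simp add: bitstrings_def)
    then show "(\<Sum>v\<in>bitstrings N. mask_prob q v - mask_prob q v * walsh s (xor_list b v)) / ?d s =
        (1 - walsh s b * (1 - 2 * q) ^ count_list s True) / ?d s"
      by (simp only: sum_subtractf sum_mask_prob expect_walsh_xor[OF assms])
  qed
  finally show ?thesis .
qed

text \<open>For \<open>r = 1 - 2q\<close>, \<open>block_time N r\<close> solves the Poisson equation of the walk on
  \<open>N\<close> bits that flips every bit independently with probability \<open>q\<close> and stops at the
  all-ones string: each Walsh character is an eigenfunction of the flip kernel, with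
  eigenvalue \<open>r\<close> to the number of bits it depends on.\<close>

lemma block_time_drift:
  assumes q: "0 < q" "q < 1" and b: "length b = N" "b \<noteq> replicate N True"
  shows "block_time N (1 - 2 * q) b - (\<Sum>v\<in>bitstrings N. mask_prob q v * block_time N (1 - 2 * q) (xor_list b v)) = 1"
proof -
  let ?r = "1 - 2 * q"
  let ?S = "bitstrings N - {replicate N False}"
  let ?d = "\<lambda>s. 1 - ?r ^ count_list s True"
  have r: "\<bar>?r\<bar> < 1"
    using q by auto
  have "block_time N ?r b - (\<Sum>s\<in>?S. (1 - walsh s b * ?r ^ count_list s True) / ?d s) =
        (\<Sum>s\<in>?S. - walsh s b)"
    unfolding block_time_def sum_subtractf[symmetric]
  proof (intro sum.cong refl)
    fix s assume "s \<in> ?S"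
    with power_count_list_neq_1[OF r] have "?d s \<noteq> 0" .
    have "(1 - walsh s b) / ?d s - (1 - walsh s b * ?r ^ count_list s True) / ?d s = (- walsh s b * ?d s) / ?d s"
      by (simp add: diff_divide_distrib[symmetric] algebra_simps)
    with \<open>?d s \<noteq> 0\<close> show "(1 - walsh s b) / ?d s - (1 - walsh s b * ?r ^ count_list s True) / ?d s = - walsh s b"
      by simp
  qed
  also have "\<dots> = walsh (replicate N False) b - (\<Sum>s\<in>bitstrings N. walsh s b)"
    by (simp add: sum_negf sum_diff1)
  also have "\<dots> = 1"
    using sum_walsh_snd[OF b(1)] b(2) walsh_zero by simp
  finally show ?thesis
    unfolding expect_block_time_xor[OF b(1)] .
qed

lemma sum_block_time:
  "(\<Sum>b\<in>bitstrings N. block_time N r b) =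
     2 ^ N * (\<Sum>s\<in>bitstrings N - {replicate N False}. 1 / (1 - r ^ count_list s True))"
proof -
  have "(\<Sum>b\<in>bitstrings N. block_time N r b) =
      (\<Sum>s\<in>bitstrings N - {replicate N False}. (\<Sum>b\<in>bitstrings N. 1 - walsh s b) / (1 - r ^ count_list s True))"
    unfolding block_time_def by (subst sum.swap) (simp add: sum_divide_distrib)
  also have "\<dots> = (\<Sum>s\<in>bitstrings N - {replicate N False}. 2 ^ N / (1 - r ^ count_list s True))"
  proof (intro sum.cong refl)
    fix s assume s: "s \<in> bitstrings N - {replicate N False}"
    then have "(\<Sum>b\<in>bitstrings N. walsh s b) = 0"
      using sum_walsh_fst[of s N] by (simp add: bitstrings_def)
    then show "(\<Sum>b\<in>bitstrings N. 1 - walsh s b) / (1 - r ^ count_list s True) =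
        2 ^ N / (1 - r ^ count_list s True)"
      by (simp add: sum_subtractf)
  qed
  finally show ?thesis
    by (simp add: sum_distrib_left)
qed

lemma sum_count_list_binomial:
  "(\<Sum>s\<in>bitstrings N. g (count_list s True)) = (\<Sum>j\<le>N. real (N choose j) * g j)"
proof (induction N arbitrary: g)
  case 0
  then show ?case
    by (simp add: bitstrings_0)
next
  case (Suc N)
  have shift: "(\<Sum>j\<le>N. real (N choose j) * g j) = g 0 + (\<Sum>j\<le>N. real (N choose Suc j) * g (Suc j))"
  proof -
    have "(\<Sum>j\<le>N. real (N choose j) * g j) = (\<Sum>j\<le>Suc N. real (N choose j) * g j)"
      by simp
    then show ?thesis
      by (simp only: sum.atMost_Suc_shift) simp
  qed
  have "(\<Sum>s\<in>bitstrings (Suc N). g (count_list s True)) =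
      (\<Sum>j\<le>N. real (N choose j) * g (Suc j)) + (\<Sum>j\<le>N. real (N choose j) * g j)"
    unfolding sum_bitstrings_Suc by (simp add: Suc.IH[of "\<lambda>j. g (Suc j)"] Suc.IH[of g])
  also have "\<dots> = (\<Sum>j\<le>Suc N. real (Suc N choose j) * g j)"
    unfolding shift by (subst sum.atMost_Suc_shift) (simp add: algebra_simps sum.distrib)
  finally show ?case .
qed

lemma sum_count_list_binomial_nonzero:
  "(\<Sum>s\<in>bitstrings N - {replicate N False}. g (count_list s True)) = (\<Sum>j = 1..N. real (N choose j) * g j)"
proof -
  have "{..N} = insert 0 {1..N}"
    by auto
  then show ?thesis
    by (simp add: sum_diff1 sum_count_list_binomial)
qed

locale blo_ea =
  fixes n l :: nat and p :: "nat \<Rightarrow> real"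
  assumes n_pos: "n > 0" and l_pos: "l > 0" and l_dvd_n: "l dvd n"
    and rate_bounds: "\<And>m. m < n div l \<Longrightarrow> 0 < p m \<and> p m < 1"
begin

abbreviation k :: nat where
  "k \<equiv> n div l"

abbreviation level_string :: "nat \<Rightarrow> bool list \<Rightarrow> bool list \<Rightarrow> bool list" where
  "level_string i b s \<equiv> replicate (i * l) True @ b @ s"

lemma n_eq_blocks: "n = k * l"
  using l_dvd_n by simp

lemma blocks_pos: "k > 0"
  using n_pos l_pos l_dvd_n by (auto elim!: dvdE)

lemma level_end_le: "i < k \<Longrightarrow> Suc i * l \<le> n"
  using n_eq_blocks by (metis Suc_leI mult_le_mono1)

lemma length_level_string:
  assumes "i < k" "b \<in> bitstrings l" "s \<in> bitstrings (n - Suc i * l)"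
  shows "length (level_string i b s) = n"
  using assms level_end_le[OF assms(1)] by (simp add: bitstrings_def algebra_simps)

lemma sum_bitstrings_level_split:
  assumes "i < k"
  shows "(\<Sum>M\<in>bitstrings n. F M) =
    (\<Sum>u\<in>bitstrings (i * l). \<Sum>v\<in>bitstrings l. \<Sum>t\<in>bitstrings (n - Suc i * l). F (u @ v @ t))"
proof -
  have "n = i * l + (l + (n - Suc i * l))"
    using level_end_le[OF assms] by simp
  then have "(\<Sum>M\<in>bitstrings n. F M) = (\<Sum>M\<in>bitstrings (i * l + (l + (n - Suc i * l))). F M)"
    by simp
  then show ?thesis
    by (simp only: sum_bitstrings_append)
qed

lemma level_string_full_block: "level_string i (replicate l True) s = replicate (Suc i * l) True @ s"
  by (simp add: replicate_add[symmetric] add.commute)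

lemma BLO_level_string:
  assumes "i < k" "b \<in> bitstrings l - {replicate l True}" "s \<in> bitstrings (n - Suc i * l)"
  shows "BLO l (level_string i b s) = i"
proof -
  have len: "length (level_string i b s) = k * l"
    using length_level_string[OF assms(1) _ assms(3)] assms(2) n_eq_blocks by simp
  have "length b = l"
    using assms(2) by (simp add: bitstrings_def)
  then have "take (Suc i * l) (level_string i b s) = replicate (i * l) True @ b"
    by simp
  moreover have "replicate (Suc i * l) True = replicate (i * l) True @ replicate l True"
    by (simp add: replicate_add[symmetric] add.commute)
  ultimately have "\<not> Suc i \<le> BLO l (level_string i b s)"
    using le_BLO_iff[OF l_pos len, of "Suc i"] assms(1,2) by auto
  moreover have "i \<le> BLO l (level_string i b s)"
    using le_BLO_iff[OF l_pos len, of i] assms(1) by simp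
  ultimately show ?thesis
    by simp
qed

lemma BLO_eq_blocks_iff:
  assumes "x \<in> bitstrings n"
  shows "BLO l x = k \<longleftrightarrow> x = replicate n True"
proof -
  have len: "length x = k * l"
    using assms n_eq_blocks by (simp add: bitstrings_def)
  have "BLO l x = k \<longleftrightarrow> k \<le> BLO l x"
    using BLO_le_blocks[OF l_pos len] by auto
  also have "\<dots> \<longleftrightarrow> take (k * l) x = replicate (k * l) True"
    using le_BLO_iff[OF l_pos len, of k] by simp
  also have "\<dots> \<longleftrightarrow> x = replicate n True"
    using len n_eq_blocks by simp
  finally show ?thesis .
qed

lemma BLO_all_ones: "BLO l (replicate n True) = k"
  using BLO_eq_blocks_iff[of "replicate n True"] by simp

lemma BLO_less_blocks: "x \<in> bitstrings n \<Longrightarrow> BLO l x \<noteq> k \<Longrightarrow> BLO l x < k"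
  using BLO_le_blocks[OF l_pos, of x k] n_eq_blocks by (simp add: bitstrings_def)

lemma ea_select_level_string:
  assumes i: "i < k" and b: "b \<in> bitstrings l - {replicate l True}" and s: "s \<in> bitstrings (n - Suc i * l)"
    and masks: "u \<in> bitstrings (i * l)" "v \<in> bitstrings l" "t \<in> bitstrings (n - Suc i * l)"
  shows "ea_select l (level_string i b s) (u @ v @ t) =
    (if u = replicate (i * l) False then level_string i (xor_list b v) (xor_list s t) else level_string i b s)"
proof -
  let ?x = "level_string i b s" and ?y = "xor_list (level_string i b s) (u @ v @ t)"
  have lengths: "length u = i * l" "length b = l" "length v = l"
    using masks(1,2) b by (simp_all add: bitstrings_def)
  have y: "?y = map Not u @ xor_list b v @ xor_list s t"
    using lengths by (simp add: xor_list_append xor_list_replicate_True)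
  have len_y: "length ?y = k * l"
    using length_level_string[OF i _ s] b masks n_eq_blocks by (simp add: bitstrings_def)
  have "BLO l ?x \<le> BLO l ?y \<longleftrightarrow> take (i * l) ?y = replicate (i * l) True"
    using BLO_level_string[OF i b s] le_BLO_iff[OF l_pos len_y, of i] i by simp
  also have "\<dots> \<longleftrightarrow> u = replicate (i * l) False"
    unfolding y using lengths(1) map_Not_eq_replicate_True_iff[of u] by simp
  finally have accept: "BLO l ?x \<le> BLO l ?y \<longleftrightarrow> u = replicate (i * l) False" .
  show ?thesis
  proof (cases "u = replicate (i * l) False")
    case True
    then have "?y = level_string i (xor_list b v) (xor_list s t)"
      unfolding y by simp
    then show ?thesis
      using accept True unfolding ea_select_def Let_def by simp
  next
    case False
    then show ?thesis
      using accept unfolding ea_select_def Let_def by simp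
  qed
qed

section \<open>The transition kernel on level strings\<close>

definition kernel :: "(bool list \<Rightarrow> real) \<Rightarrow> bool list \<Rightarrow> real" where
  "kernel f x = (\<Sum>M\<in>bitstrings n. pmf (flip_mask n (p (BLO l x))) M * f (ea_select l x M))"

definition killed_kernel :: "(bool list \<Rightarrow> real) \<Rightarrow> bool list \<Rightarrow> real" where
  "killed_kernel f x = (if BLO l x = k then 0 else kernel f x)"

lemma killed_kernel_all_ones: "killed_kernel f (replicate n True) = 0"
  unfolding killed_kernel_def using BLO_all_ones by simp

lemma rate_le_1: "m < k \<Longrightarrow> 0 \<le> p m \<and> p m \<le> 1"
  using rate_bounds[of m] by auto

lemma sum_pmf_flip_mask_eq:
  assumes "m < k"
  shows "(\<Sum>M\<in>bitstrings n. pmf (flip_mask n (p m)) M * g M) = (\<Sum>M\<in>bitstrings n. mask_prob (p m) M * g M)"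
  using pmf_flip_mask[of "p m" n] rate_le_1[OF assms] by simp

lemma kernel_level_string:
  assumes i: "i < k" and b: "b \<in> bitstrings l - {replicate l True}" and s: "s \<in> bitstrings (n - Suc i * l)"
  shows "kernel f (level_string i b s) =
    (\<Sum>u\<in>bitstrings (i * l). \<Sum>v\<in>bitstrings l. \<Sum>t\<in>bitstrings (n - Suc i * l).
       mask_prob (p i) u * mask_prob (p i) v * mask_prob (p i) t *
       f (if u = replicate (i * l) False then level_string i (xor_list b v) (xor_list s t) else level_string i b s))"
  unfolding kernel_def BLO_level_string[OF i b s] sum_pmf_flip_mask_eq[OF i] sum_bitstrings_level_split[OF i]
  using ea_select_level_string[OF i b s] by (intro sum.cong refl) (simp add: mask_prob_append bitstrings_def)

text \<open>The tail stays uniform: summed over the tail, a step from fitness \<open>i\<close> is accepted with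
  probability \<open>(1 - p i) ^ (i * l)\<close>, and then it moves the current block and merely
  permutes the tails.\<close>

lemma sum_kernel_level_string:
  assumes i: "i < k" and b: "b \<in> bitstrings l - {replicate l True}"
  defines "T \<equiv> bitstrings (n - Suc i * l)"
  shows "(\<Sum>s\<in>T. kernel f (level_string i b s)) =
    (1 - p i) ^ (i * l) * (\<Sum>v\<in>bitstrings l. mask_prob (p i) v * (\<Sum>s\<in>T. f (level_string i (xor_list b v) s))) +
    (1 - (1 - p i) ^ (i * l)) * (\<Sum>s\<in>T. f (level_string i b s))"
proof -
  let ?q = "p i"
  have inner: "(\<Sum>s\<in>T. \<Sum>t\<in>T. mask_prob ?q t *
      f (if u = replicate (i * l) False then level_string i (xor_list b v) (xor_list s t) else level_string i b s))
    = (if u = replicate (i * l) False then (\<Sum>s\<in>T. f (level_string i (xor_list b v) s)) else (\<Sum>s\<in>T. f (level_string i b s)))"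
    for u v
    unfolding T_def
    using sum_mask_prob_xor_shift[where q = ?q and F = "\<lambda>s. f (level_string i (xor_list b v) s)"]
    by (simp add: sum_distrib_right[symmetric] sum_distrib_left[symmetric] sum_mask_prob)
  let ?F = "\<lambda>u v s t. f (if u = replicate (i * l) False then level_string i (xor_list b v) (xor_list s t) else level_string i b s)"
  have "(\<Sum>s\<in>T. kernel f (level_string i b s)) =
      (\<Sum>s\<in>T. \<Sum>u\<in>bitstrings (i * l). \<Sum>v\<in>bitstrings l. \<Sum>t\<in>T. mask_prob ?q u * mask_prob ?q v * mask_prob ?q t * ?F u v s t)"
    unfolding T_def by (rule sum.cong[OF refl], rule kernel_level_string[OF i b])
  also have "\<dots> = (\<Sum>u\<in>bitstrings (i * l). \<Sum>s\<in>T. \<Sum>v\<in>bitstrings l. \<Sum>t\<in>T. mask_prob ?q u * mask_prob ?q v * mask_prob ?q t * ?F u v s t)"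
    by (rule sum.swap)
  also have "\<dots> = (\<Sum>u\<in>bitstrings (i * l). \<Sum>v\<in>bitstrings l. \<Sum>s\<in>T. \<Sum>t\<in>T. mask_prob ?q u * mask_prob ?q v * mask_prob ?q t * ?F u v s t)"
    by (rule sum.cong[OF refl], rule sum.swap)
  also have "\<dots> = (\<Sum>u\<in>bitstrings (i * l). \<Sum>v\<in>bitstrings l. mask_prob ?q u * mask_prob ?q v *
        (\<Sum>s\<in>T. \<Sum>t\<in>T. mask_prob ?q t * ?F u v s t))"
    by (simp add: sum_distrib_left mult.assoc)
  also have "\<dots> = (\<Sum>u\<in>bitstrings (i * l). mask_prob ?q u *
      (if u = replicate (i * l) False
       then (\<Sum>v\<in>bitstrings l. mask_prob ?q v * (\<Sum>s\<in>T. f (level_string i (xor_list b v) s)))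
       else (\<Sum>s\<in>T. f (level_string i b s))))"
    unfolding inner
    by (intro sum.cong refl) (simp add: sum_distrib_left[symmetric] sum_distrib_right[symmetric] sum_mask_prob mult.assoc)
  also have "\<dots> = (1 - ?q) ^ (i * l) * (\<Sum>v\<in>bitstrings l. mask_prob ?q v * (\<Sum>s\<in>T. f (level_string i (xor_list b v) s))) +
      (1 - (1 - ?q) ^ (i * l)) * (\<Sum>s\<in>T. f (level_string i b s))"
    by (rule sum_mask_prob_if_zero)
  finally show ?thesis .
qed

section \<open>Balanced functions\<close>

text \<open>Balanced functions have zero mean whenever, given the fitness and the current block,
  the tail is uniformly distributed.\<close>

definition balanced :: "(bool list \<Rightarrow> real) \<Rightarrow> bool" where
  "balanced f \<longleftrightarrow> f (replicate n True) = 0 \<and>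
     (\<forall>i<k. \<forall>b\<in>bitstrings l - {replicate l True}. (\<Sum>s\<in>bitstrings (n - Suc i * l). f (level_string i b s)) = 0)"

lemma balanced_zero: "balanced (\<lambda>x. 0)"
  unfolding balanced_def by simp

lemma balanced_add: "balanced f \<Longrightarrow> balanced g \<Longrightarrow> balanced (\<lambda>x. f x + g x)"
  unfolding balanced_def by (simp add: sum.distrib)

lemma sum_balanced_prefix:
  assumes "balanced f" "i \<le> k"
  shows "(\<Sum>s\<in>bitstrings (n - i * l). f (replicate (i * l) True @ s)) = 0"
  using assms(2)
proof (induction rule: inc_induct)
  case base
  have "n - k * l = 0"
    using n_eq_blocks by simp
  then show ?case
    using assms(1) n_eq_blocks by (simp add: bitstrings_0 balanced_def)
next
  case (step i)
  let ?T = "bitstrings (n - Suc i * l)"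
  have "n - i * l = l + (n - Suc i * l)"
    using level_end_le[OF step(2)] by simp
  then have "(\<Sum>s\<in>bitstrings (n - i * l). f (replicate (i * l) True @ s)) =
      (\<Sum>b\<in>bitstrings l. \<Sum>s\<in>?T. f (level_string i b s))"
    by (simp add: sum_bitstrings_append)
  also have "\<dots> = (\<Sum>s\<in>?T. f (level_string i (replicate l True) s)) +
      (\<Sum>b\<in>bitstrings l - {replicate l True}. \<Sum>s\<in>?T. f (level_string i b s))"
    by (rule sum.remove) simp_all
  also have "\<dots> = 0"
    using assms(1) step unfolding balanced_def level_string_full_block by simp
  finally show ?case .
qed

lemma sum_balanced: "balanced f \<Longrightarrow> (\<Sum>x\<in>bitstrings n. f x) = 0"
  using sum_balanced_prefix[of f 0] by simp

lemma balanced_killed_kernel: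
  assumes f: "balanced f"
  shows "balanced (killed_kernel f)"
  unfolding balanced_def
proof (intro conjI allI impI ballI)
  show "killed_kernel f (replicate n True) = 0"
    by (rule killed_kernel_all_ones)
next
  fix i b assume i: "i < k" and b: "b \<in> bitstrings l - {replicate l True}"
  let ?T = "bitstrings (n - Suc i * l)"
  have tail_sum: "(\<Sum>s\<in>?T. f (level_string i b' s)) = 0" if "b' \<in> bitstrings l" for b'
  proof (cases "b' = replicate l True")
    case True
    then show ?thesis
      using sum_balanced_prefix[OF f, of "Suc i"] i unfolding True level_string_full_block by simp
  qed (use f i that in \<open>auto simp: balanced_def\<close>)
  have "(\<Sum>s\<in>?T. killed_kernel f (level_string i b s)) = (\<Sum>s\<in>?T. kernel f (level_string i b s))"
    unfolding killed_kernel_def using BLO_level_string[OF i b] i by (intro sum.cong refl) auto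
  also have "\<dots> = 0"
    unfolding sum_kernel_level_string[OF i b] using b tail_sum
    by (simp add: bitstrings_def)
  finally show "(\<Sum>s\<in>?T. killed_kernel f (level_string i b s)) = 0" .
qed

section \<open>The potential\<close>

definition block :: "nat \<Rightarrow> bool list \<Rightarrow> bool list" where
  "block j x = take l (drop (j * l) x)"

text \<open>\<open>potential x\<close> is the sum over all levels \<open>j\<close> of the expected time the walk on block \<open>j\<close>
  needs to become full, inflated by \<open>(1 - p j) ^ (j * l)\<close>, the probability that a step
  at level \<open>j\<close> keeps the prefix intact.\<close>

definition potential :: "bool list \<Rightarrow> real" where
  "potential x = (\<Sum>j<k. block_time l (1 - 2 * p j) (block j x) / (1 - p j) ^ (j * l))"

definition defect :: "bool list \<Rightarrow> real" where
  "defect x = potential x - (if BLO l x = k then 0 else 1 + kernel potential x)"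

lemma block_in_prefix:
  assumes "j < i"
  shows "block j (replicate (i * l) True @ z) = replicate l True"
proof -
  have "i * l = (j + Suc (i - Suc j)) * l"
    using assms by simp
  then have "i * l = j * l + (l + (i - Suc j) * l)"
    by (simp add: algebra_simps)
  then show ?thesis
    unfolding block_def by (simp add: replicate_add)
qed

lemma block_at_level: "length c = l \<Longrightarrow> block i (level_string i c s) = c"
  unfolding block_def by simp

lemma block_in_suffix:
  assumes "length c = l" "i < j"
  shows "block j (level_string i c s) = block (j - Suc i) s"
proof -
  have "j * l = (i + Suc (j - Suc i)) * l"
    using assms(2) by simp
  then have "j * l = i * l + l + (j - Suc i) * l"
    by (simp add: algebra_simps)
  then show ?thesis
    unfolding block_def using assms(1) by (simp add: add.assoc)
qed

lemma block_all_ones: "j < k \<Longrightarrow> block j (replicate n True) = replicate l True"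
  unfolding block_def using level_end_le[of j] by (simp add: min_def)

lemma potential_all_ones: "potential (replicate n True) = 0"
  unfolding potential_def by (intro sum.neutral) (simp add: block_all_ones block_time_all_ones)

lemma potential_level_string:
  assumes "i < k" "length c = l"
  shows "potential (level_string i c s) =
    block_time l (1 - 2 * p i) c / (1 - p i) ^ (i * l) +
    (\<Sum>j = Suc i..<k. block_time l (1 - 2 * p j) (block (j - Suc i) s) / (1 - p j) ^ (j * l))"
proof -
  let ?g = "\<lambda>j. block_time l (1 - 2 * p j) (block j (level_string i c s)) / (1 - p j) ^ (j * l)"
  have "potential (level_string i c s) = (\<Sum>j = i..<k. ?g j)"
    unfolding potential_def
    by (rule sum.mono_neutral_right) (auto simp: block_in_prefix block_time_all_ones)
  also have "\<dots> = ?g i + (\<Sum>j = Suc i..<k. ?g j)"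
    using assms(1) by (simp add: sum.atLeast_Suc_lessThan)
  finally show ?thesis
    using assms(2) by (simp add: block_at_level block_in_suffix)
qed

lemma sum_potential_level_string:
  assumes "i < k" "c \<in> bitstrings l"
  shows "(\<Sum>s\<in>bitstrings (n - Suc i * l). potential (level_string i c s)) =
    card (bitstrings (n - Suc i * l)) * block_time l (1 - 2 * p i) c / (1 - p i) ^ (i * l) +
    (\<Sum>s\<in>bitstrings (n - Suc i * l). \<Sum>j = Suc i..<k. block_time l (1 - 2 * p j) (block (j - Suc i) s) / (1 - p j) ^ (j * l))"
  using assms by (simp add: potential_level_string bitstrings_def sum.distrib)

lemma balanced_defect: "balanced defect"
  unfolding balanced_def
proof (intro conjI allI impI ballI)
  show "defect (replicate n True) = 0"
    unfolding defect_def using BLO_all_ones potential_all_ones by simp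
next
  fix i b assume i: "i < k" and b: "b \<in> bitstrings l - {replicate l True}"
  let ?T = "bitstrings (n - Suc i * l)"
  let ?w = "(1 - p i) ^ (i * l)"
  let ?h = "block_time l (1 - 2 * p i)"
  define C where "C = (\<Sum>s\<in>?T. \<Sum>j = Suc i..<k. block_time l (1 - 2 * p j) (block (j - Suc i) s) / (1 - p j) ^ (j * l))"
  have w: "?w \<noteq> 0"
    using rate_bounds[OF i] by simp
  have level_sum: "(\<Sum>s\<in>?T. potential (level_string i c s)) = card ?T * ?h c / ?w + C"
    if "c \<in> bitstrings l" for c
    unfolding C_def by (rule sum_potential_level_string[OF i that])
  let ?E = "\<Sum>v\<in>bitstrings l. mask_prob (p i) v * ?h (xor_list b v)"
  have drift: "?h b - ?E = 1"
    using block_time_drift[of "p i" b l] rate_bounds[OF i] b by (simp add: bitstrings_def)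
  have xor_in: "xor_list b v \<in> bitstrings l" if "v \<in> bitstrings l" for v
    using that b by (simp add: bitstrings_def)
  have "(\<Sum>s\<in>?T. kernel potential (level_string i b s)) =
      ?w * (\<Sum>v\<in>bitstrings l. mask_prob (p i) v * (card ?T * ?h (xor_list b v) / ?w + C)) +
      (1 - ?w) * (card ?T * ?h b / ?w + C)"
    unfolding sum_kernel_level_string[OF i b] using b xor_in level_sum by simp
  also have "(\<Sum>v\<in>bitstrings l. mask_prob (p i) v * (card ?T * ?h (xor_list b v) / ?w + C)) =
      card ?T / ?w * ?E + (\<Sum>v\<in>bitstrings l. mask_prob (p i) v) * C"
    by (simp add: sum.distrib sum_distrib_left sum_distrib_right algebra_simps)
  also have "?w * (card ?T / ?w * ?E + (\<Sum>v\<in>bitstrings l. mask_prob (p i) v) * C) +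
      (1 - ?w) * (card ?T * ?h b / ?w + C) =
      card ?T * ?E + C + (1 - ?w) * card ?T * ?h b / ?w"
    using w by (simp add: sum_mask_prob field_simps)
  finally have "(\<Sum>s\<in>?T. defect (level_string i b s)) =
      card ?T * ?h b / ?w + C - card ?T - (card ?T * ?E + C + (1 - ?w) * card ?T * ?h b / ?w)"
    unfolding defect_def using BLO_level_string[OF i b] i b level_sum
    by (simp add: sum_subtractf sum.distrib)
  also have "\<dots> = card ?T * (?h b - ?E - 1)"
    using w by (simp add: diff_divide_distrib algebra_simps)
  finally show "(\<Sum>s\<in>?T. defect (level_string i b s)) = 0"
    unfolding drift by simp
qed

fun trunc_runtime :: "nat \<Rightarrow> bool list \<Rightarrow> real" where
  "trunc_runtime 0 x = 0"
| "trunc_runtime (Suc N) x = (if BLO l x = k then 0 else 1 + kernel (trunc_runtime N) x)"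

lemma kernel_add: "kernel (\<lambda>y. f y + g y) x = kernel f x + kernel g x"
  unfolding kernel_def by (simp add: sum.distrib algebra_simps)

lemma kernel_diff: "kernel (\<lambda>y. f y - g y) x = kernel f x - kernel g x"
  unfolding kernel_def by (simp add: sum_subtractf algebra_simps)

lemma kernel_mono: "(\<And>y. f y \<le> g y) \<Longrightarrow> kernel f x \<le> kernel g x"
  unfolding kernel_def by (intro sum_mono mult_left_mono) auto

lemma killed_kernel_add: "killed_kernel (\<lambda>y. f y + g y) x = killed_kernel f x + killed_kernel g x"
  unfolding killed_kernel_def by (simp add: kernel_add)

lemma trunc_runtime_mono: "trunc_runtime N x \<le> trunc_runtime (Suc N) x"
proof (induction N arbitrary: x)
  case 0
  have "trunc_runtime 0 = (\<lambda>y. 0)"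
    by (rule ext) simp
  then show ?case
    by (simp add: kernel_def)
next
  case (Suc N)
  then show ?case
    using kernel_mono[of "trunc_runtime N" "trunc_runtime (Suc N)" x]
    by (simp del: trunc_runtime.simps(2)) (simp only: trunc_runtime.simps(2), auto)
qed

lemma trunc_runtime_nonneg: "0 \<le> trunc_runtime N x"
proof (induction N arbitrary: x)
  case (Suc N)
  then show ?case
    using Suc.IH[of x] trunc_runtime_mono[of N x] by linarith
qed simp

lemma potential_minus_trunc_runtime:
  "\<exists>g. balanced g \<and> (\<forall>x. potential x - trunc_runtime N x = g x + (killed_kernel ^^ N) potential x)"
proof (induction N)
  case 0
  show ?case
    using balanced_zero by auto
next
  case (Suc N)
  then obtain g where g: "balanced g" "\<And>x. potential x - trunc_runtime N x = g x + (killed_kernel ^^ N) potential x"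
    by blast
  have "potential x - trunc_runtime (Suc N) x = defect x + killed_kernel (\<lambda>y. potential y - trunc_runtime N y) x" for x
    unfolding defect_def killed_kernel_def by (simp add: kernel_diff)
  then have "potential x - trunc_runtime (Suc N) x =
      defect x + killed_kernel g x + (killed_kernel ^^ Suc N) potential x" for x
    unfolding g(2) killed_kernel_add by simp
  moreover have "balanced (\<lambda>x. defect x + killed_kernel g x)"
    using balanced_add[OF balanced_defect balanced_killed_kernel[OF g(1)]] .
  ultimately show ?case
    by auto
qed

lemma sum_trunc_runtime:
  "(\<Sum>x\<in>bitstrings n. trunc_runtime N x) =
     (\<Sum>x\<in>bitstrings n. potential x) - (\<Sum>x\<in>bitstrings n. (killed_kernel ^^ N) potential x)"
proof -
  obtain g where "balanced g" "\<And>x. potential x - trunc_runtime N x = g x + (killed_kernel ^^ N) potential x"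
    using potential_minus_trunc_runtime by blast
  then have "(\<Sum>x\<in>bitstrings n. potential x) - (\<Sum>x\<in>bitstrings n. trunc_runtime N x) =
      (\<Sum>x\<in>bitstrings n. (killed_kernel ^^ N) potential x)"
    by (simp add: sum_subtractf[symmetric] sum.distrib sum_balanced)
  then show ?thesis
    by simp
qed

section \<open>Convergence and evaluation\<close>

lemma abs_kernel_le:
  assumes x: "x \<in> bitstrings n" "BLO l x \<noteq> k"
    and f: "\<And>y. y \<in> bitstrings n \<Longrightarrow> \<bar>f y\<bar> \<le> B" "f (replicate n True) = 0"
  shows "\<bar>kernel f x\<bar> \<le> (1 - mask_prob (p (BLO l x)) (map Not x)) * B"
proof -
  let ?q = "p (BLO l x)" and ?S = "map Not x"
  have m: "BLO l x < k"
    using BLO_less_blocks[OF x] .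
  have S: "?S \<in> bitstrings n"
    using x by (simp add: bitstrings_def)
  have "ea_select l x ?S = replicate n True"
    using xor_list_map_Not[of x] x BLO_all_ones m by (simp add: ea_select_def bitstrings_def)
  then have "kernel f x = (\<Sum>M\<in>bitstrings n - {?S}. mask_prob ?q M * f (ea_select l x M))"
    unfolding kernel_def sum_pmf_flip_mask_eq[OF m] using S f(2) by (simp add: sum.remove)
  also have "\<bar>\<dots>\<bar> \<le> (\<Sum>M\<in>bitstrings n - {?S}. mask_prob ?q M * B)"
  proof (rule order_trans[OF sum_abs sum_mono])
    fix M assume "M \<in> bitstrings n - {?S}"
    then have "\<bar>f (ea_select l x M)\<bar> \<le> B"
      using ea_select_bitstrings[OF x(1)] f(1) by auto
    then show "\<bar>mask_prob ?q M * f (ea_select l x M)\<bar> \<le> mask_prob ?q M * B"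
      using mask_prob_nonneg rate_le_1[OF m] by (simp add: abs_mult mult_left_mono)
  qed
  also have "\<dots> = (1 - mask_prob ?q ?S) * B"
    using S by (simp add: sum_distrib_right[symmetric] sum_diff1 sum_mask_prob)
  finally show ?thesis .
qed

lemma escape_prob_lower_bound:
  obtains \<delta> where "0 < \<delta>" "\<delta> \<le> 1"
    "\<And>x. x \<in> bitstrings n \<Longrightarrow> BLO l x \<noteq> k \<Longrightarrow> \<delta> \<le> mask_prob (p (BLO l x)) (map Not x)"
proof
  let ?S = "(\<lambda>x. mask_prob (p (BLO l x)) (map Not x)) ` {x\<in>bitstrings n. BLO l x \<noteq> k}"
  have "replicate n False \<in> {x\<in>bitstrings n. BLO l x \<noteq> k}"
    using BLO_eq_blocks_iff[of "replicate n False"] n_pos by simp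
  then have "?S \<noteq> {}"
    by blast
  moreover have "finite ?S"
    by simp
  moreover have "\<forall>d\<in>?S. 0 < d"
    using mask_prob_pos rate_bounds BLO_less_blocks by force
  ultimately show "0 < min 1 (Min ?S)"
    by simp
  show "min 1 (Min ?S) \<le> 1"
    by simp
  fix x assume "x \<in> bitstrings n" "BLO l x \<noteq> k"
  then show "min 1 (Min ?S) \<le> mask_prob (p (BLO l x)) (map Not x)"
    by (simp add: min.coboundedI2)
qed

lemma abs_killed_kernel_power_le:
  assumes \<delta>: "\<delta> \<le> 1" "\<And>x. x \<in> bitstrings n \<Longrightarrow> BLO l x \<noteq> k \<Longrightarrow> \<delta> \<le> mask_prob (p (BLO l x)) (map Not x)"
    and x: "x \<in> bitstrings n"
  shows "\<bar>(killed_kernel ^^ N) potential x\<bar> \<le> (1 - \<delta>) ^ N * (\<Sum>y\<in>bitstrings n. \<bar>potential y\<bar>)"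
  using x
proof (induction N arbitrary: x)
  case 0
  then show ?case
    by (auto intro: member_le_sum)
next
  case (Suc N)
  let ?g = "(killed_kernel ^^ N) potential" and ?B = "\<Sum>y\<in>bitstrings n. \<bar>potential y\<bar>"
  have g0: "?g (replicate n True) = 0"
    by (cases N) (simp_all add: killed_kernel_all_ones potential_all_ones)
  have C: "0 \<le> (1 - \<delta>) ^ N * ?B"
    using \<delta>(1) by (simp add: sum_nonneg)
  show ?case
  proof (cases "BLO l x = k")
    case False
    have "\<bar>kernel ?g x\<bar> \<le> (1 - mask_prob (p (BLO l x)) (map Not x)) * ((1 - \<delta>) ^ N * ?B)"
      using abs_kernel_le[where f = ?g and B = "(1 - \<delta>) ^ N * ?B", OF Suc.prems False Suc.IH g0] .
    also have "\<dots> \<le> (1 - \<delta>) * ((1 - \<delta>) ^ N * ?B)"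
      using \<delta>(2)[OF Suc.prems False] C by (intro mult_right_mono) simp_all
    finally show ?thesis
      using False by (simp add: killed_kernel_def[of ?g] mult.assoc)
  qed (use \<delta>(1) C in \<open>simp add: killed_kernel_def[of ?g] mult.assoc\<close>)
qed

lemma sum_killed_kernel_power_tendsto:
  "(\<lambda>N. \<Sum>x\<in>bitstrings n. (killed_kernel ^^ N) potential x) \<longlonglongrightarrow> 0"
proof -
  obtain \<delta> where \<delta>: "0 < \<delta>" "\<delta> \<le> 1"
    "\<And>x. x \<in> bitstrings n \<Longrightarrow> BLO l x \<noteq> k \<Longrightarrow> \<delta> \<le> mask_prob (p (BLO l x)) (map Not x)"
    using escape_prob_lower_bound by blast
  define B where "B = (\<Sum>y\<in>bitstrings n. \<bar>potential y\<bar>)"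
  have norm_bound: "norm (\<Sum>x\<in>bitstrings n. (killed_kernel ^^ N) potential x) \<le> 2 ^ n * B * (1 - \<delta>) ^ N" for N
  proof -
    have "norm (\<Sum>x\<in>bitstrings n. (killed_kernel ^^ N) potential x) \<le> (\<Sum>x\<in>bitstrings n. (1 - \<delta>) ^ N * B)"
      unfolding real_norm_def B_def
      by (rule order_trans[OF sum_abs sum_mono[OF abs_killed_kernel_power_le[OF \<delta>(2,3)]]])
    then show ?thesis
      by (simp add: mult_ac)
  qed
  have "(\<lambda>N. 2 ^ n * B * (1 - \<delta>) ^ N) \<longlonglongrightarrow> 0"
    using \<delta>(1,2) by (intro tendsto_mult_right_zero LIMSEQ_power_zero) simp
  moreover have "\<forall>\<^sub>F N in sequentially. norm (\<Sum>x\<in>bitstrings n. (killed_kernel ^^ N) potential x) \<le> 2 ^ n * B * (1 - \<delta>) ^ N"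
    using norm_bound by (intro always_eventually allI)
  ultimately show ?thesis
    by (rule Lim_null_comparison[rotated])
qed

lemma sum_block:
  fixes F :: "bool list \<Rightarrow> real"
  assumes "j < k"
  shows "(\<Sum>x\<in>bitstrings n. F (block j x)) = 2 ^ (n - l) * (\<Sum>c\<in>bitstrings l. F c)"
proof -
  have "(\<Sum>x\<in>bitstrings n. F (block j x)) =
      (\<Sum>u\<in>bitstrings (j * l). \<Sum>v\<in>bitstrings l. \<Sum>t\<in>bitstrings (n - Suc j * l). F v)"
    unfolding sum_bitstrings_level_split[OF assms]
    by (intro sum.cong refl) (simp add: block_def bitstrings_def)
  also have "\<dots> = 2 ^ (j * l + (n - Suc j * l)) * (\<Sum>c\<in>bitstrings l. F c)"
    by (simp add: power_add sum_distrib_left[symmetric])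
  also have "j * l + (n - Suc j * l) = n - l"
    using level_end_le[OF assms] by simp
  finally show ?thesis .
qed

lemma sum_potential:
  "(\<Sum>x\<in>bitstrings n. potential x) =
    2 ^ n * (\<Sum>m<k. 1 / (1 - p m) ^ (m * l) * (\<Sum>j = 1..l. real (l choose j) * (1 / (1 - (1 - 2 * p m) ^ j))))"
proof -
  define X where "X m = (\<Sum>j = 1..l. real (l choose j) * (1 / (1 - (1 - 2 * p m) ^ j)))" for m
  have block_sum: "(\<Sum>x\<in>bitstrings n. block_time l (1 - 2 * p m) (block m x)) = 2 ^ n * X m" if "m < k" for m
  proof -
    have "l \<le> n"
      using level_end_le[OF that] by simp
    then show ?thesis
      unfolding sum_block[OF that] sum_block_time X_def sum_count_list_binomial_nonzero[of "\<lambda>j. 1 / (1 - (1 - 2 * p m) ^ j)"]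
      by (simp flip: power_add)
  qed
  have "(\<Sum>x\<in>bitstrings n. potential x) =
      (\<Sum>m<k. (\<Sum>x\<in>bitstrings n. block_time l (1 - 2 * p m) (block m x)) / (1 - p m) ^ (m * l))"
    unfolding potential_def by (subst sum.swap) (simp add: sum_divide_distrib)
  also have "\<dots> = (\<Sum>m<k. 2 ^ n * X m / (1 - p m) ^ (m * l))"
    by (rule sum.cong[OF refl]) (simp add: block_sum)
  also have "\<dots> = 2 ^ n * (\<Sum>m<k. 1 / (1 - p m) ^ (m * l) * X m)"
    by (simp add: sum_distrib_left)
  finally show ?thesis
    unfolding X_def .
qed

abbreviation step_stream :: "(nat \<Rightarrow> bool list) stream measure" where
  "step_stream \<equiv> stream_space (measure_pmf (step_rand n l p))"

lemma prob_space_step_stream: "prob_space step_stream"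
  by (rule prob_space.prob_space_stream_space) (rule prob_space_measure_pmf)

lemma step_rand_component: "m < k \<Longrightarrow> map_pmf (\<lambda>r. r m) (step_rand n l p) = flip_mask n (p m)"
  unfolding step_rand_def by (subst Pi_pmf_component) auto

lemma nn_integral_ea_step:
  assumes x: "x \<in> bitstrings n" "BLO l x \<noteq> k"
    and g: "\<And>y. y \<in> bitstrings n \<Longrightarrow> g y = ennreal (f y)" and f: "\<And>y. 0 \<le> f y"
  shows "(\<integral>\<^sup>+r. g (ea_step l x r) \<partial>measure_pmf (step_rand n l p)) = ennreal (kernel f x)"
proof -
  let ?m = "BLO l x"
  have m: "?m < k"
    using BLO_less_blocks[OF x] .
  have "(\<integral>\<^sup>+r. g (ea_step l x r) \<partial>measure_pmf (step_rand n l p)) =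
      (\<integral>\<^sup>+M. g (ea_select l x M) \<partial>measure_pmf (map_pmf (\<lambda>r. r ?m) (step_rand n l p)))"
    by (simp add: ea_step_eq_ea_select nn_integral_map_pmf)
  also have "\<dots> = (\<integral>\<^sup>+M. g (ea_select l x M) \<partial>measure_pmf (flip_mask n (p ?m)))"
    unfolding step_rand_component[OF m] ..
  also have "\<dots> = (\<Sum>M\<in>bitstrings n. g (ea_select l x M) * pmf (flip_mask n (p ?m)) M)"
    using set_pmf_flip_mask rate_le_1[OF m] by (intro nn_integral_measure_pmf_support) auto
  also have "\<dots> = (\<Sum>M\<in>bitstrings n. ennreal (pmf (flip_mask n (p ?m)) M * f (ea_select l x M)))"
    using g ea_select_bitstrings[OF x(1)] f by (intro sum.cong refl) (simp add: ennreal_mult[symmetric] mult.commute)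
  also have "\<dots> = ennreal (kernel f x)"
    unfolding kernel_def using f by (intro sum_ennreal) simp
  finally show ?thesis .
qed

definition exp_runtime_upto :: "nat \<Rightarrow> bool list \<Rightarrow> ennreal" where
  "exp_runtime_upto N x = (\<integral>\<^sup>+\<omega>. runtime_upto n l N x \<omega> \<partial>step_stream)"

lemma exp_runtime_upto_Suc:
  "exp_runtime_upto (Suc N) x =
     (if BLO l x = k then 0 else 1 + (\<integral>\<^sup>+r. exp_runtime_upto N (ea_step l x r) \<partial>measure_pmf (step_rand n l p)))"
proof (cases "BLO l x = k")
  case False
  interpret step_stream: prob_space step_stream
    by (rule prob_space_step_stream)
  have "exp_runtime_upto (Suc N) x =
      (\<integral>\<^sup>+r. (\<integral>\<^sup>+\<omega>. runtime_upto n l (Suc N) x (r ## \<omega>) \<partial>step_stream) \<partial>measure_pmf (step_rand n l p))"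
    unfolding exp_runtime_upto_def
    by (rule prob_space.nn_integral_stream_space[OF prob_space_measure_pmf runtime_upto_measurable])
  also have "\<dots> = (\<integral>\<^sup>+r. 1 + exp_runtime_upto N (ea_step l x r) \<partial>measure_pmf (step_rand n l p))"
    using False unfolding exp_runtime_upto_def
    by (simp add: nn_integral_add runtime_upto_measurable step_stream.emeasure_space_1)
  finally show ?thesis
    using False by (simp add: nn_integral_add)
qed (simp add: exp_runtime_upto_def)

lemma exp_runtime_upto_eq: "x \<in> bitstrings n \<Longrightarrow> exp_runtime_upto N x = ennreal (trunc_runtime N x)"
proof (induction N arbitrary: x)
  case 0
  then show ?case
    by (simp add: exp_runtime_upto_def)
next
  case (Suc N)
  show ?case
  proof (cases "BLO l x = k")
    case False
    have "(\<integral>\<^sup>+r. exp_runtime_upto N (ea_step l x r) \<partial>measure_pmf (step_rand n l p)) = ennreal (kernel (trunc_runtime N) x)"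
      using nn_integral_ea_step[where g = "exp_runtime_upto N", OF Suc.prems False Suc.IH trunc_runtime_nonneg] .
    moreover have "0 \<le> kernel (trunc_runtime N) x"
      unfolding kernel_def by (intro sum_nonneg) (simp add: trunc_runtime_nonneg)
    ultimately show ?thesis
      using False by (simp add: exp_runtime_upto_Suc ennreal_plus)
  qed (simp add: exp_runtime_upto_Suc)
qed

lemma ea_space_eq: "ea_space n l p = measure_pmf (pmf_of_set (bitstrings n)) \<Otimes>\<^sub>M step_stream"
  unfolding ea_space_def bitstrings_def ..

lemma runtime_upto_measurable_ea_space:
  "(\<lambda>z. runtime_upto n l N (fst z) (snd z)) \<in> borel_measurable (ea_space n l p)"
proof -
  have "(\<lambda>z. runtime_upto n l N y (snd z)) \<in> borel_measurable (ea_space n l p)" for y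
    unfolding ea_space_eq using measurable_snd runtime_upto_measurable by (rule measurable_compose)
  moreover have "fst \<in> measurable (ea_space n l p) (count_space UNIV)"
    unfolding ea_space_eq using measurable_fst[of _ step_stream] by simp
  ultimately show ?thesis
    by (rule measurable_compose_countable)
qed

lemma nn_integral_runtime_upto:
  "(\<integral>\<^sup>+z. runtime_upto n l N (fst z) (snd z) \<partial>ea_space n l p) =
     ennreal ((\<Sum>x\<in>bitstrings n. trunc_runtime N x) / 2 ^ n)"
proof -
  interpret step_stream: prob_space step_stream
    by (rule prob_space_step_stream)
  have nonempty: "bitstrings n \<noteq> {}"
    using replicate_in_bitstrings by blast
  have "(\<integral>\<^sup>+z. runtime_upto n l N (fst z) (snd z) \<partial>ea_space n l p) =
      (\<integral>\<^sup>+x. exp_runtime_upto N x \<partial>measure_pmf (pmf_of_set (bitstrings n)))"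
    unfolding exp_runtime_upto_def
    using step_stream.nn_integral_fst[OF runtime_upto_measurable_ea_space[unfolded ea_space_eq]]
    by (simp add: ea_space_eq)
  also have "\<dots> = (\<Sum>x\<in>bitstrings n. exp_runtime_upto N x) / of_nat (card (bitstrings n))"
    by (rule nn_integral_pmf_of_set[OF nonempty finite_bitstrings])
  also have "\<dots> = ennreal (\<Sum>x\<in>bitstrings n. trunc_runtime N x) / ennreal (2 ^ n)"
    by (simp add: exp_runtime_upto_eq sum_ennreal trunc_runtime_nonneg ennreal_of_nat_eq_real_of_nat)
  also have "\<dots> = ennreal ((\<Sum>x\<in>bitstrings n. trunc_runtime N x) / 2 ^ n)"
    by (rule divide_ennreal) (simp_all add: sum_nonneg trunc_runtime_nonneg)
  finally show ?thesis .
qed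

lemma expected_runtime_eq_SUP:
  "ea_expected_runtime n l p = (SUP N. ennreal ((\<Sum>x\<in>bitstrings n. trunc_runtime N x) / 2 ^ n))"
proof -
  have "ea_expected_runtime n l p = (\<integral>\<^sup>+z. (SUP N. runtime_upto n l N (fst z) (snd z)) \<partial>ea_space n l p)"
    unfolding ea_expected_runtime_def by (intro nn_integral_cong) (metis SUP_runtime_upto prod.collapse)
  also have "\<dots> = (SUP N. \<integral>\<^sup>+z. runtime_upto n l N (fst z) (snd z) \<partial>ea_space n l p)"
    using incseq_runtime_upto runtime_upto_measurable_ea_space
    by (intro nn_integral_monotone_convergence_SUP) (auto simp: incseq_def le_fun_def)
  finally show ?thesis
    unfolding nn_integral_runtime_upto .
qed

theorem expected_runtime_formula:
  "ea_expected_runtime n l p =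
     ennreal (\<Sum>m<k. 1 / (1 - p m) ^ (m * l) * (\<Sum>j = 1..l. real (l choose j) * (1 / (1 - (1 - 2 * p m) ^ j))))"
proof -
  let ?a = "\<lambda>N. (\<Sum>x\<in>bitstrings n. trunc_runtime N x) / 2 ^ n"
  have "incseq (\<lambda>N. ennreal (?a N))"
    by (intro incseq_SucI ennreal_leI divide_right_mono sum_mono trunc_runtime_mono) simp
  then have "(\<lambda>N. ennreal (?a N)) \<longlonglongrightarrow> (SUP N. ennreal (?a N))"
    by (rule LIMSEQ_SUP)
  moreover have "?a \<longlonglongrightarrow> (\<Sum>x\<in>bitstrings n. potential x) / 2 ^ n"
    unfolding sum_trunc_runtime
    using tendsto_diff[OF tendsto_const sum_killed_kernel_power_tendsto] by (intro tendsto_divide) auto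
  ultimately have "(SUP N. ennreal (?a N)) = ennreal ((\<Sum>x\<in>bitstrings n. potential x) / 2 ^ n)"
    using LIMSEQ_unique tendsto_ennrealI by blast
  then show ?thesis
    unfolding expected_runtime_eq_SUP sum_potential by simp
qed

end

lemma geometric_level_sum:
  fixes q :: real
  assumes q: "0 < q" "q < 1" and n: "n = k * l" and l: "l > 0"
  shows "(\<Sum>m<k. 1 / (1 - q) ^ (m * l)) = ((1 - q) powr (- real n + real l) - (1 - q) ^ l) / (1 - (1 - q) ^ l)"
proof -
  define s where "s = (1 - q) ^ l"
  have s: "0 < s" "s < 1"
    unfolding s_def using q l by (auto simp: power_less_one_iff)
  have "(\<Sum>m<k. 1 / (1 - q) ^ (m * l)) = (\<Sum>m<k. (1 / s) ^ m)"
    unfolding s_def by (intro sum.cong refl) (metis power_mult mult.commute power_one_over)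
  also have "\<dots> = ((1 / s) ^ k - 1) / (1 / s - 1)"
    using s by (intro geometric_sum) simp
  also have "\<dots> = (s / s ^ k - s) / (1 - s)"
    using s by (simp add: field_simps)
  also have "s / s ^ k = (1 - q) powr (- real n + real l)"
  proof -
    have "(1 - q) powr real n = s ^ k"
      unfolding s_def n using q powr_realpow[of "1 - q" "k * l"] by (simp add: power_mult[symmetric] mult.commute)
    moreover have "(1 - q) powr real l = s"
      unfolding s_def using q by (simp add: powr_realpow)
    ultimately show ?thesis
      using powr_diff[of "1 - q" "real l" "real n"] by simp
  qed
  finally show ?thesis
    unfolding s_def .
qed

theorem mainTheorem6:
  fixes n l :: nat and p :: "nat \<Rightarrow> real"
  assumes "n > 0" and "l > 0" and "l dvd n"
    and "\<And>m. m < n div l \<Longrightarrow> 0 < p m \<and> p m < 1"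
  shows "ea_expected_runtime n l p =
           ennreal (\<Sum>m = 0..n div l - 1. 1 / (1 - p m) ^ (m * l) *
              (\<Sum>j = 1..l. real (l choose j) * (1 / (1 - (1 - 2 * p m) ^ j)))) \<and>
         (\<forall>q :: real. 0 < q \<and> q < 1 \<longrightarrow>
           ea_expected_runtime n l (\<lambda>_. q) =
           ennreal (((1 - q) powr (- real n + real l) - (1 - q) ^ l) / (1 - (1 - q) ^ l) *
              (\<Sum>j = 1..l. real (l choose j) * (1 / (1 - (1 - 2 * q) ^ j)))))"
proof (intro conjI allI impI)
  interpret blo_ea n l p
    using assms by unfold_locales
  have "{0..n div l - 1} = {..<n div l}"
    using blocks_pos by auto
  then show "ea_expected_runtime n l p =
      ennreal (\<Sum>m = 0..n div l - 1. 1 / (1 - p m) ^ (m * l) *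
        (\<Sum>j = 1..l. real (l choose j) * (1 / (1 - (1 - 2 * p m) ^ j))))"
    using expected_runtime_formula by simp
next
  fix q :: real
  assume q: "0 < q \<and> q < 1"
  interpret static: blo_ea n l "\<lambda>_. q"
    using assms q by unfold_locales auto
  show "ea_expected_runtime n l (\<lambda>_. q) =
      ennreal (((1 - q) powr (- real n + real l) - (1 - q) ^ l) / (1 - (1 - q) ^ l) *
        (\<Sum>j = 1..l. real (l choose j) * (1 / (1 - (1 - 2 * q) ^ j))))"
    unfolding static.expected_runtime_formula sum_distrib_right[symmetric]
    using geometric_level_sum[of q n "n div l" l] q assms(2) static.n_eq_blocks by simp
qed

end
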